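(* Let $G=(V,E)$ be a finite directed graph with a source $s\in V$, a destination $d\in V$ and an integer time budget $T\ge 0$. Each edge $(i,j)\in E$ carries a travel-time probability mass function $p_{ij}$ supported on the positive integers, with minimum travel time $\delta_{ij}=\min\{t: p_{ij}(t)>0\}\ge 1$. Define the optimal-policy on-time arrival probabilities $u_i:\{0,1,\dots,T\}\to[0,1]$ by $u_d(t)=1$ for all $t$, and for $i\neq d$, $$u_{ij}(t)=\sum_{\tau=\delta_{ij}}^{t} u_j(t-\tau)\,p_{ij}(\tau),\qquad u_i(t)=\max_{j:(i,j)\in E} u_{ij}(t),$$ (with the maximum over an empty set equal to $0$). For a directed path $P$ from $s$ to a node $i$, let $q^P$ be the travel-time distribution along $P$ (the convolution of the $p_{e}$ over the edges $e$ of $P$; for the trivial path $[s]$ it is the point mass at $0$), and let $r^P(T)=\sum_{t=0}^{T} q^P(t)\,u_i(T-t)$. Consider the following best-first search: maintain a max-priority queue $Q$ of entries $(r,(q,P))$; initially $Q$ contains $(u_s(T),(\text{point mass at }0,[s]))$. While $Q$ is nonempty, remove an entry $(r,(q,P))$ with maximum key $r$; let $i$ be the last node of $P$; if $i=d$, return $P$; otherwise, for every $j$ with $(i,j)\in E$ and $j\notin P$, insert the entry $\big(\sum_{t=0}^{T}(q\ast p_{ij})(t)\,u_j(T-t),\ (q\ast p_{ij},\ P\,\|\,[j])\big)$, where $\ast$ is convolution and $\|$ is concatenation. If $Q$ becomes empty, return nil. Then this procedure terminates, and if it returns a path $P$, then $P$ is a simple directed path from $s$ to $d$ that maximizes the on-time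 arrival probability $\Pr(\text{travel time along }P\le T)=\sum_{t=0}^{T} q^P(t)$ over all simple directed paths from $s$ to $d$.
   Context: This is the path-based stochastic on-time arrival (SOTA) problem: find a fixed route from $s$ to $d$ maximizing the probability that the total travel time (sum of independent edge travel times) does not exceed the budget $T$. The functions $u_i$ are the on-time arrival probabilities of the optimal adaptive routing policy (where the next edge may depend on the remaining budget), and $r^P(T)$ is the arrival probability obtained by following the fixed path $P$ to its last node $i$ and then following the optimal policy. Time is discretized in integer units. *)

theory Defs
  imports Complex_Main "HOL-Library.Multiset"
begin

text \<open>Travel-time distributions are functions nat \<Rightarrow> real (pmfs on integer times).\<close>

definition conv :: "(nat \<Rightarrow> real) \<Rightarrow> (nat \<Rightarrow> real) \<Rightarrow> nat \<Rightarrow> real" where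
  "conv f g t = (\<Sum>k\<le>t. f k * g (t - k))"

definition point0 :: "nat \<Rightarrow> real" where
  "point0 t = (if t = 0 then 1 else 0)"

definition min_tt :: "('v \<Rightarrow> 'v \<Rightarrow> nat \<Rightarrow> real) \<Rightarrow> 'v \<Rightarrow> 'v \<Rightarrow> nat" where
  "min_tt p i j = (LEAST t. p i j t > 0)"

definition maxz :: "real set \<Rightarrow> real" where
  "maxz S = (if S = {} then 0 else Max S)"

definition u_edge :: "('v \<Rightarrow> 'v \<Rightarrow> nat \<Rightarrow> real) \<Rightarrow> ('v \<Rightarrow> nat \<Rightarrow> real) \<Rightarrow> 'v \<Rightarrow> 'v \<Rightarrow> nat \<Rightarrow> real" where
  "u_edge p u i j t = (\<Sum>\<tau> = min_tt p i j..t. u j (t - \<tau>) * p i j \<tau>)"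

definition is_opt_u :: "'v set \<Rightarrow> ('v \<times> 'v) set \<Rightarrow> ('v \<Rightarrow> 'v \<Rightarrow> nat \<Rightarrow> real) \<Rightarrow> 'v \<Rightarrow> nat
    \<Rightarrow> ('v \<Rightarrow> nat \<Rightarrow> real) \<Rightarrow> bool" where
  "is_opt_u V E p d T u \<longleftrightarrow>
     (\<forall>t\<le>T. u d t = 1 \<and>
        (\<forall>i\<in>V. i \<noteq> d \<longrightarrow> u i t = maxz {u_edge p u i j t | j. (i, j) \<in> E}))"

fun path_dist :: "('v \<Rightarrow> 'v \<Rightarrow> nat \<Rightarrow> real) \<Rightarrow> 'v list \<Rightarrow> nat \<Rightarrow> real" where
  "path_dist p [] = point0"
| "path_dist p [v] = point0"
| "path_dist p (a # b # rest) = conv (p a b) (path_dist p (b # rest))"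

definition r_val :: "nat \<Rightarrow> ('v \<Rightarrow> nat \<Rightarrow> real) \<Rightarrow> 'v \<Rightarrow> (nat \<Rightarrow> real) \<Rightarrow> real" where
  "r_val T u i q = (\<Sum>t\<le>T. q t * u i (T - t))"

definition on_time_prob :: "('v \<Rightarrow> 'v \<Rightarrow> nat \<Rightarrow> real) \<Rightarrow> nat \<Rightarrow> 'v list \<Rightarrow> real" where
  "on_time_prob p T P = (\<Sum>t\<le>T. path_dist p P t)"

definition simple_path :: "('v \<times> 'v) set \<Rightarrow> 'v \<Rightarrow> 'v \<Rightarrow> 'v list \<Rightarrow> bool" where
  "simple_path E s d P \<longleftrightarrow> P \<noteq> [] \<and> hd P = s \<and> last P = d \<and> distinct P \<and>
     (\<forall>k. Suc k < length P \<longrightarrow> (P ! k, P ! Suc k) \<in> E)"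

text \<open>States of the best-first search: running with a queue (multiset of entries (r,(q,P))),
  or returned (Some P / None = nil).\<close>
datatype 'v sstate =
    Run "(real \<times> ((nat \<Rightarrow> real) \<times> 'v list)) multiset"
  | Ret "'v list option"

definition expand_entries :: "('v \<times> 'v) set \<Rightarrow> ('v \<Rightarrow> 'v \<Rightarrow> nat \<Rightarrow> real) \<Rightarrow> ('v \<Rightarrow> nat \<Rightarrow> real)
    \<Rightarrow> nat \<Rightarrow> (nat \<Rightarrow> real) \<Rightarrow> 'v list \<Rightarrow> (real \<times> ((nat \<Rightarrow> real) \<times> 'v list)) multiset" where
  "expand_entries E p u T q P =
     image_mset (\<lambda>j. (r_val T u j (conv q (p (last P) j)), (conv q (p (last P) j), P @ [j])))
       (mset_set {j. (last P, j) \<in> E \<and> j \<notin> set P})"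

text \<open>One step of the search (nondeterministic in tie-breaking among maximal keys).\<close>
inductive search_step :: "('v \<times> 'v) set \<Rightarrow> ('v \<Rightarrow> 'v \<Rightarrow> nat \<Rightarrow> real) \<Rightarrow> ('v \<Rightarrow> nat \<Rightarrow> real)
    \<Rightarrow> nat \<Rightarrow> 'v \<Rightarrow> 'v sstate \<Rightarrow> 'v sstate \<Rightarrow> bool"
  for E p u T d where
  ret: "(r, (q, P)) \<in># Q \<Longrightarrow> (\<forall>e \<in># Q. fst e \<le> r) \<Longrightarrow> last P = d \<Longrightarrow>
        search_step E p u T d (Run Q) (Ret (Some P))"
| expand: "(r, (q, P)) \<in># Q \<Longrightarrow> (\<forall>e \<in># Q. fst e \<le> r) \<Longrightarrow> last P \<noteq> d \<Longrightarrow>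
        search_step E p u T d (Run Q)
          (Run (Q - {#(r, (q, P))#} + expand_entries E p u T q P))"
| empty: "search_step E p u T d (Run {#}) (Ret None)"

definition search_init :: "('v \<Rightarrow> nat \<Rightarrow> real) \<Rightarrow> nat \<Rightarrow> 'v \<Rightarrow> 'v sstate" where
  "search_init u T s = Run {# (u s T, (point0, [s])) #}"

end

theory Submission
  imports Defs "HOL-Computational_Algebra.Formal_Power_Series"
begin

text \<open>Every entry (r, (q, P)) in the queue satisfies q = q^P and r = r^P(T). Since the optimal
  adaptive policy is at least as good as any fixed continuation, r^P(T) bounds the on-time
  arrival probability of every simple s-d path extending P. Every simple s-d path always
  extends the path of some queued entry, so when an entry with last node d is removed, its key,
  which is then exactly its own on-time arrival probability, dominates all simple s-d paths.
  Termination holds because each expansion replaces a path by strictly longer simple paths,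
  which decreases the multiset of the numbers card V + 1 - length P.\<close>

lemma conv_eq_fps_nth: "conv f g = fps_nth (Abs_fps f * Abs_fps g)"
  by (auto simp: conv_def fps_mult_nth fun_eq_iff atLeast0AtMost)

lemma conv_assoc: "conv f (conv g h) = conv (conv f g) h"
  by (simp add: conv_eq_fps_nth mult.assoc fps_nth_inverse Abs_fps_inverse)

lemma point0_eq_fps_nth: "point0 = fps_nth 1"
  by (auto simp: point0_def fun_eq_iff)

lemma conv_point0_left [simp]: "conv point0 f = f"
  by (simp add: conv_eq_fps_nth point0_eq_fps_nth fps_nth_inverse Abs_fps_inverse)

lemma conv_point0_right [simp]: "conv f point0 = f"
  by (simp add: conv_eq_fps_nth point0_eq_fps_nth fps_nth_inverse Abs_fps_inverse)

lemma sum_atMost_conv: "(\<Sum>t\<le>n. conv f g t) = (\<Sum>k\<le>n. f k * (\<Sum>m\<le>n - k. g m))"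
proof -
  have cumulative: "(\<Sum>t\<le>n. h t) = conv h (\<lambda>_. 1) n" for h :: "nat \<Rightarrow> real" and n
    by (simp add: conv_def)
  show ?thesis
    by (simp add: cumulative conv_assoc[symmetric]) (simp add: conv_def)
qed

lemma conv_nonneg: "(\<And>t. f t \<ge> 0) \<Longrightarrow> (\<And>t. g t \<ge> 0) \<Longrightarrow> conv f g t \<ge> 0"
  unfolding conv_def by (intro sum_nonneg mult_nonneg_nonneg) auto

lemma r_val_point0: "r_val T u i point0 = u i T"
  unfolding r_val_def point0_def by (simp add: of_bool_def[symmetric])

abbreviation walk :: "('v \<times> 'v) set \<Rightarrow> 'v list \<Rightarrow> bool" where
  "walk E \<equiv> successively (\<lambda>i j. (i, j) \<in> E)"

lemma simple_path_iff_walk: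
  "simple_path E s d P \<longleftrightarrow> P \<noteq> [] \<and> hd P = s \<and> last P = d \<and> distinct P \<and> walk E P"
  unfolding simple_path_def successively_conv_nth by blast

lemma path_dist_append:
  "P \<noteq> [] \<Longrightarrow> path_dist p (P @ Q) = conv (path_dist p P) (path_dist p (last P # Q))"
proof (induction p P rule: path_dist.induct)
  case (3 p a b rest)
  then show ?case by (simp add: conv_assoc)
qed simp_all

lemma path_dist_snoc: "P \<noteq> [] \<Longrightarrow> path_dist p (P @ [j]) = conv (path_dist p P) (p (last P) j)"
  by (simp add: path_dist_append)

lemma path_dist_nonneg:
  assumes "\<And>i j t. (i, j) \<in> E \<Longrightarrow> p i j t \<ge> 0" and "walk E P"
  shows "path_dist p P t \<ge> 0"
  using assms(2)
proof (induction P arbitrary: t rule: induct_list012)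
  case (3 a b rest)
  then show ?case by (auto intro!: conv_nonneg assms(1))
qed (simp_all add: point0_def)

locale sota_network =
  fixes V :: "'v set" and E :: "('v \<times> 'v) set" and s d :: 'v and T :: nat
    and p :: "'v \<Rightarrow> 'v \<Rightarrow> nat \<Rightarrow> real" and u :: "'v \<Rightarrow> nat \<Rightarrow> real"
  assumes finite_V: "finite V" and edges_in_V: "E \<subseteq> V \<times> V" and source_in_V: "s \<in> V"
    and pmf_nonneg: "\<And>i j t. (i, j) \<in> E \<Longrightarrow> p i j t \<ge> 0"
    and opt_u: "is_opt_u V E p d T u"
begin

lemma u_destination: "t \<le> T \<Longrightarrow> u d t = 1"
  using opt_u unfolding is_opt_u_def by blast

lemma u_edge_eq_conv:
  assumes "(i, j) \<in> E"
  shows "u_edge p u i j t = conv (p i j) (u j) t"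
proof -
  have "p i j \<tau> = 0" if "\<tau> < min_tt p i j" for \<tau>
    using not_less_Least[OF that[unfolded min_tt_def]] pmf_nonneg[OF assms, of \<tau>] by simp
  then have "(\<Sum>\<tau>\<le>t. p i j \<tau> * u j (t - \<tau>)) = (\<Sum>\<tau>=min_tt p i j..t. p i j \<tau> * u j (t - \<tau>))"
    by (intro sum.mono_neutral_right) auto
  then show ?thesis unfolding u_edge_def conv_def by (simp add: mult.commute)
qed

lemma u_edge_le_u:
  assumes "(i, j) \<in> E" "i \<noteq> d" "t \<le> T"
  shows "u_edge p u i j t \<le> u i t"
proof -
  let ?S = "{u_edge p u i j t | j. (i, j) \<in> E}"
  have "i \<in> V" using assms(1) edges_in_V by auto
  then have u_i: "u i t = maxz ?S" using opt_u assms(2,3) unfolding is_opt_u_def by blast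
  have "?S \<subseteq> (\<lambda>j. u_edge p u i j t) ` V" using edges_in_V by auto
  then have "finite ?S" using finite_V finite_subset by blast
  moreover have "u_edge p u i j t \<in> ?S" using assms(1) by blast
  ultimately show ?thesis unfolding u_i maxz_def by auto
qed

lemma cdf_path_dist_le_u:
  "L \<noteq> [] \<Longrightarrow> last L = d \<Longrightarrow> distinct L \<Longrightarrow> walk E L \<Longrightarrow> t \<le> T \<Longrightarrow>
    (\<Sum>k\<le>t. path_dist p L k) \<le> u (hd L) t"
proof (induction L arbitrary: t rule: induct_list012)
  case (2 a)
  then show ?case by (simp add: point0_def u_destination)
next
  case (3 a b rest)
  then have ab: "(a, b) \<in> E" by simp
  have "d \<in> set (b # rest)" using "3.prems"(2) by (metis last_ConsR last_in_set list.distinct(1))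
  then have a_ne_d: "a \<noteq> d" using "3.prems"(3) by auto
  have "(\<Sum>k\<le>t. path_dist p (a # b # rest) k)
      = (\<Sum>\<tau>\<le>t. p a b \<tau> * (\<Sum>m\<le>t - \<tau>. path_dist p (b # rest) m))"
    by (simp add: sum_atMost_conv)
  also have "\<dots> \<le> (\<Sum>\<tau>\<le>t. p a b \<tau> * u b (t - \<tau>))"
    using 3 by (intro sum_mono mult_left_mono pmf_nonneg[OF ab]) auto
  also have "\<dots> = u_edge p u a b t"
    by (simp add: u_edge_eq_conv[OF ab] conv_def)
  also have "\<dots> \<le> u a t"
    using u_edge_le_u[OF ab a_ne_d] 3 by simp
  finally show ?case by simp
qed simp

lemma on_time_prob_le_r_val:
  assumes "P \<noteq> []" and "last (P @ rest) = d" "distinct (P @ rest)" "walk E (P @ rest)"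
  shows "on_time_prob p T (P @ rest) \<le> r_val T u (last P) (path_dist p P)"
proof -
  let ?L = "last P # rest"
  have split: "P @ rest = butlast P @ ?L" using assms(1) by simp
  have L: "last ?L = d" "distinct ?L" "walk E ?L"
    using assms unfolding split by (auto simp: successively_append_iff split: if_splits)
  have "on_time_prob p T (P @ rest) = (\<Sum>k\<le>T. path_dist p P k * (\<Sum>m\<le>T - k. path_dist p ?L m))"
    by (simp add: on_time_prob_def path_dist_append[OF assms(1)] sum_atMost_conv)
  also have "\<dots> \<le> (\<Sum>k\<le>T. path_dist p P k * u (last P) (T - k))"
  proof (intro sum_mono mult_left_mono)
    fix k assume "k \<in> {..T}"
    then show "(\<Sum>m\<le>T - k. path_dist p ?L m) \<le> u (last P) (T - k)"
      using cdf_path_dist_le_u[OF _ L] by simp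
    show "path_dist p P k \<ge> 0"
      using assms(4) by (intro path_dist_nonneg[OF pmf_nonneg]) (auto simp: successively_append_iff)
  qed
  finally show ?thesis by (simp add: r_val_def)
qed

definition valid_entry :: "real \<times> (nat \<Rightarrow> real) \<times> 'v list \<Rightarrow> bool" where
  "valid_entry = (\<lambda>(r, q, P). P \<noteq> [] \<and> hd P = s \<and> distinct P \<and> set P \<subseteq> V \<and> walk E P
      \<and> q = path_dist p P \<and> r = r_val T u (last P) q)"

definition optimal_path :: "'v list \<Rightarrow> bool" where
  "optimal_path P \<longleftrightarrow> simple_path E s d P \<and>
     (\<forall>P'. simple_path E s d P' \<longrightarrow> on_time_prob p T P' \<le> on_time_prob p T P)"

fun search_inv :: "'v sstate \<Rightarrow> bool" where
  "search_inv (Run Q) \<longleftrightarrow> (\<forall>e\<in>#Q. valid_entry e) \<and>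
     (\<forall>P'. simple_path E s d P' \<longrightarrow> (\<exists>e\<in>#Q. \<exists>rest. P' = snd (snd e) @ rest))"
| "search_inv (Ret None) \<longleftrightarrow> True"
| "search_inv (Ret (Some P)) \<longleftrightarrow> optimal_path P"

lemma in_expand_entries_iff:
  "e \<in># expand_entries E p u T q P \<longleftrightarrow>
    (\<exists>j. (last P, j) \<in> E \<and> j \<notin> set P \<and>
       e = (r_val T u j (conv q (p (last P) j)), conv q (p (last P) j), P @ [j]))"
proof -
  have "finite {j. (last P, j) \<in> E \<and> j \<notin> set P}"
    using edges_in_V by (auto intro: finite_subset[OF _ finite_V])
  then show ?thesis unfolding expand_entries_def by auto
qed

lemma valid_entry_expand:
  assumes "valid_entry (r, q, P)" and "e \<in># expand_entries E p u T q P"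
  shows "valid_entry e"
proof -
  obtain j where j: "(last P, j) \<in> E" "j \<notin> set P"
    and e: "e = (r_val T u j (conv q (p (last P) j)), conv q (p (last P) j), P @ [j])"
    using assms(2) in_expand_entries_iff by blast
  have "j \<in> V" using j(1) edges_in_V by auto
  with assms(1) j show ?thesis
    unfolding e valid_entry_def by (auto simp: path_dist_snoc successively_append_iff)
qed

lemma expand_entries_cover_extensions:
  assumes "valid_entry (r, q, P)" and "simple_path E s d (P @ rest)" and "last P \<noteq> d"
  shows "\<exists>e\<in>#expand_entries E p u T q P. \<exists>rest'. P @ rest = snd (snd e) @ rest'"
proof -
  from assms obtain j rest' where rest: "rest = j # rest'"
    by (cases rest) (auto simp: simple_path_iff_walk)
  with assms have "(last P, j) \<in> E" "j \<notin> set P"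
    by (auto simp: simple_path_iff_walk valid_entry_def successively_append_iff)
  then have "(r_val T u j (conv q (p (last P) j)), conv q (p (last P) j), P @ [j])
      \<in># expand_entries E p u T q P"
    using in_expand_entries_iff by blast
  moreover have "P @ rest = (P @ [j]) @ rest'" unfolding rest by simp
  ultimately show ?thesis by (metis snd_conv)
qed

lemma optimal_path_if_removed:
  assumes inv: "search_inv (Run Q)" and max: "\<forall>e\<in>#Q. fst e \<le> r"
    and entry: "(r, q, P) \<in># Q" and "last P = d"
  shows "optimal_path P"
proof -
  have valid: "valid_entry (r, q, P)" using inv entry by simp
  then have r_eq: "r = on_time_prob p T P"
    using \<open>last P = d\<close> u_destination by (auto simp: valid_entry_def r_val_def on_time_prob_def)
  have "on_time_prob p T P' \<le> r" if "simple_path E s d P'" for P'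
  proof -
    have "\<forall>P'. simple_path E s d P' \<longrightarrow> (\<exists>e\<in>#Q. \<exists>rest. P' = snd (snd e) @ rest)"
      using inv by simp
    then obtain e rest where "e \<in># Q" and "P' = snd (snd e) @ rest"
      using \<open>simple_path E s d P'\<close> by blast
    moreover obtain r' q' P0 where "e = (r', q', P0)" by (cases e)
    ultimately have e: "(r', q', P0) \<in># Q" and P': "P' = P0 @ rest" by auto
    have "valid_entry (r', q', P0)" using inv e by simp
    then have "on_time_prob p T P' \<le> r'"
      using \<open>simple_path E s d P'\<close> unfolding P'
      by (auto simp: valid_entry_def simple_path_iff_walk intro: on_time_prob_le_r_val)
    also have "r' \<le> r" using max e by fastforce
    finally show ?thesis .
  qed
  moreover have "simple_path E s d P"
    using valid \<open>last P = d\<close> by (auto simp: valid_entry_def simple_path_iff_walk)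
  ultimately show ?thesis unfolding optimal_path_def r_eq by blast
qed

lemma search_inv_init: "search_inv (search_init u T s)"
proof -
  have "valid_entry (u s T, point0, [s])"
    using source_in_V by (simp add: valid_entry_def r_val_point0)
  moreover have "\<exists>rest. P' = [s] @ rest" if "simple_path E s d P'" for P'
    using that unfolding simple_path_def by (metis append_Cons append_Nil list.exhaust_sel)
  ultimately show ?thesis unfolding search_init_def by auto
qed

lemma search_inv_step: "search_step E p u T d S S' \<Longrightarrow> search_inv S \<Longrightarrow> search_inv S'"
proof (induction rule: search_step.induct)
  case (ret r q P Q)
  then show ?case by (simp add: optimal_path_if_removed)
next
  case (expand r q P Q)
  let ?e = "(r, q, P)"
  have valid: "valid_entry ?e" using expand by simp
  have "\<exists>e\<in>#Q - {#?e#} + expand_entries E p u T q P. \<exists>rest. P' = snd (snd e) @ rest"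
    if path: "simple_path E s d P'" for P'
  proof -
    have "\<forall>P'. simple_path E s d P' \<longrightarrow> (\<exists>e\<in>#Q. \<exists>rest. P' = snd (snd e) @ rest)"
      using expand.prems by simp
    then obtain e rest where e: "e \<in># Q" "P' = snd (snd e) @ rest" using path by blast
    show ?thesis
    proof (cases "e = ?e")
      case True
      with e(2) have "P' = P @ rest" by simp
      with path obtain e' rest' where "e' \<in># expand_entries E p u T q P" "P' = snd (snd e') @ rest'"
        using expand_entries_cover_extensions[OF valid _ expand.hyps(3)] by blast
      then show ?thesis by (intro bexI[of _ e']) auto
    next
      case False
      then have "e \<in># Q - {#?e#}" using e(1) by (simp add: in_diff_count)
      then show ?thesis using e(2) by (intro bexI[of _ e]) auto
    qed
  qed
  moreover have "valid_entry e" if "e \<in># Q - {#?e#} + expand_entries E p u T q P" for e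
  proof (cases "e \<in># expand_entries E p u T q P")
    case True
    then show ?thesis by (rule valid_entry_expand[OF valid])
  next
    case False
    then have "e \<in># Q" using that by (auto dest: in_diffD)
    then show ?thesis using expand.prems by simp
  qed
  ultimately show ?case by simp
qed simp

lemma search_inv_reachable:
  "(search_step E p u T d)\<^sup>*\<^sup>* (search_init u T s) S \<Longrightarrow> search_inv S"
  by (induction rule: rtranclp_induct) (auto intro: search_inv_init search_inv_step)

lemma search_step_exists_if_running: "\<exists>S'. search_step E p u T d (Run Q) S'"
proof (cases "Q = {#}")
  case True
  then show ?thesis by (blast intro: search_step.empty)
next
  case False
  let ?keys = "fst ` set_mset Q"
  obtain r q P where entry: "(r, q, P) \<in># Q" and "r = Max ?keys"
    using Max_in[of ?keys] False by fastforce
  then have max: "\<forall>e\<in>#Q. fst e \<le> r" by simp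
  show ?thesis
    using search_step.ret[OF entry max] search_step.expand[OF entry max] by blast
qed

definition potential :: "(real \<times> (nat \<Rightarrow> real) \<times> 'v list) multiset \<Rightarrow> nat multiset" where
  "potential Q = image_mset (\<lambda>(r, q, P). Suc (card V) - length P) Q"

lemma length_le_card_V: "valid_entry (r, q, P) \<Longrightarrow> length P \<le> card V"
  unfolding valid_entry_def by (metis (mono_tags) case_prod_conv card_mono distinct_card finite_V)

lemma potential_decreases:
  assumes "search_inv (Run Q)" and "search_step E p u T d (Run Q) (Run Q')"
  shows "(potential Q', potential Q) \<in> mult less_than"
proof -
  from assms(2) obtain r q P where entry: "(r, q, P) \<in># Q" and "last P \<noteq> d"
    and Q': "Q' = Q - {#(r, q, P)#} + expand_entries E p u T q P"
    by (cases rule: search_step.cases) auto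
  have valid: "valid_entry (r, q, P)" using assms(1) entry by simp
  have "Suc (card V) - length (P @ [j]) < Suc (card V) - length P"
    if "(last P, j) \<in> E" "j \<notin> set P" for j
  proof -
    have "valid_entry (r_val T u j (conv q (p (last P) j)), conv q (p (last P) j), P @ [j])"
      using that by (intro valid_entry_expand[OF valid]) (auto simp: in_expand_entries_iff)
    from length_le_card_V[OF this] show ?thesis by simp
  qed
  then have "\<forall>k\<in>#potential (expand_entries E p u T q P).
      (k, Suc (card V) - length P) \<in> less_than"
    by (auto simp: potential_def in_expand_entries_iff)
  then have "(potential (Q - {#(r, q, P)#}) + potential (expand_entries E p u T q P),
      potential (Q - {#(r, q, P)#}) + {#Suc (card V) - length P#}) \<in> mult less_than"
    by (intro one_step_implies_mult) auto
  moreover have "potential Q = potential (Q - {#(r, q, P)#}) + {#Suc (card V) - length P#}"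
  proof -
    have "potential (add_mset (r, q, P) (Q - {#(r, q, P)#}))
        = potential (Q - {#(r, q, P)#}) + {#Suc (card V) - length P#}"
      by (simp add: potential_def)
    then show ?thesis using insert_DiffM[OF entry] by simp
  qed
  ultimately show ?thesis unfolding Q' potential_def by simp
qed

lemma no_infinite_run:
  "\<not> (\<exists>f. f 0 = search_init u T s \<and> (\<forall>n. search_step E p u T d (f n) (f (Suc n))))"
proof
  assume "\<exists>f. f 0 = search_init u T s \<and> (\<forall>n. search_step E p u T d (f n) (f (Suc n)))"
  then obtain f where f0: "f 0 = search_init u T s"
    and steps: "\<And>n. search_step E p u T d (f n) (f (Suc n))" by blast
  have "(search_step E p u T d)\<^sup>*\<^sup>* (search_init u T s) (f n)" for n
    by (induction n) (auto simp: f0 intro: rtranclp.rtrancl_into_rtrancl steps)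
  then have inv: "search_inv (f n)" for n by (rule search_inv_reachable)
  have "\<exists>Q. f n = Run Q" for n
    using steps[of n] by (cases rule: search_step.cases) auto
  then obtain Q where Q: "\<And>n. f n = Run (Q n)" by metis
  have "(potential (Q (Suc n)), potential (Q n)) \<in> mult less_than" for n
    using potential_decreases inv[of n] steps[of n] unfolding Q by blast
  then have "\<exists>g. \<forall>n. (g (Suc n), g n) \<in> mult less_than" by (intro exI[of _ "potential \<circ> Q"]) simp
  then show False
    using wf_mult[OF wf_less_than] unfolding wf_iff_no_infinite_down_chain by blast
qed

end

theorem mainTheorem1:
  fixes V :: "'v set" and E :: "('v \<times> 'v) set" and s d :: 'v and T :: nat
    and p :: "'v \<Rightarrow> 'v \<Rightarrow> nat \<Rightarrow> real" and u :: "'v \<Rightarrow> nat \<Rightarrow> real"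
  assumes "finite V" and "E \<subseteq> V \<times> V" and "s \<in> V" and "d \<in> V"
    and "\<And>i j t. (i, j) \<in> E \<Longrightarrow> p i j t \<ge> 0"
    and "\<And>i j. (i, j) \<in> E \<Longrightarrow> p i j 0 = 0"
    and "\<And>i j. (i, j) \<in> E \<Longrightarrow> p i j sums 1"
    and "is_opt_u V E p d T u"
  shows "(\<not> (\<exists>f. f 0 = search_init u T s \<and> (\<forall>n. search_step E p u T d (f n) (f (Suc n))))) \<and>
    (\<forall>S. (search_step E p u T d)\<^sup>*\<^sup>* (search_init u T s) S \<longrightarrow>
           (\<exists>R. S = Ret R) \<or> (\<exists>S'. search_step E p u T d S S')) \<and>
    (\<forall>P. (search_step E p u T d)\<^sup>*\<^sup>* (search_init u T s) (Ret (Some P)) \<longrightarrow>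
           simple_path E s d P \<and>
           (\<forall>P'. simple_path E s d P' \<longrightarrow> on_time_prob p T P' \<le> on_time_prob p T P))"
proof -
  interpret sota_network V E s d T p u
    using assms by unfold_locales
  have "(\<exists>R. S = Ret R) \<or> (\<exists>S'. search_step E p u T d S S')" for S
    using search_step_exists_if_running by (cases S) auto
  moreover have "optimal_path P"
    if "(search_step E p u T d)\<^sup>*\<^sup>* (search_init u T s) (Ret (Some P))" for P
    using search_inv_reachable[OF that] by simp
  ultimately show ?thesis
    using no_infinite_run unfolding optimal_path_def by blast
qed

end
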